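(* Let $\Phi_D$ be a set of BS indices containing $0$, $\Psi_D=\Phi_D\setminus\{0\}$ (sums assumed convergent), $K\ge1$, $\tau_c$, $\tau_p$ with $K\le\tau_p\le\tau_c$, and positive numbers $p_{l'i},q_{l'i},\beta_{0l'i}$ ($l'\in\Phi_D$, $i=1,\dots,K$), $\sigma^2$, $B_W$; fix $k$. For $M\ge1$ define the closed-form rates $$R^{rp}_{0k}(M)=B_W\Big(1-\frac{\tau_p}{\tau_c}\Big)\log_2\!\Big(1+\frac{Mp_{0k}\beta_{00k}}{\frac{M}{\tau_p}\sum_{l'\in\Psi_D}\sum_{i=1}^K\frac{p_{l'i}q_{l'i}}{q_{0k}}\frac{\beta_{0l'i}^2}{\beta_{00k}}+\frac{1}{\gamma^{rp}_{0k}}(\sum_{l'\in\Phi_D}\sum_{i=1}^Kp_{l'i}\beta_{0l'i}+\sigma^2)}\Big),$$ $\gamma^{rp}_{0k}=\frac{q_{0k}\tau_p\beta_{00k}}{q_{0k}\tau_p\beta_{00k}+\sum_{l'\in\Psi_D}\sum_iq_{l'i}\beta_{0l'i}+\sigma^2}$; $R^{sp}_{0k}(M)=B_W\log_2(1+Mp_{0k}\beta_{00k}/\mathcal I^{sp}(M))$ with $$\mathcal I^{sp}(M)=\frac{M}{\tau_c}\sum_{l'\in\Psi_D}\sum_{i=1}^K\frac{(p_{l'i}+(1-\frac1{\tau_c})q_{l'i})q_{l'i}}{q_{0k}}\frac{\beta_{0l'i}^2}{\beta_{00k}}+\frac{M}{\tau_c}\sum_{l'\in\Phi_D}\sum_{i=1}^K\frac{(p_{l'i}+q_{l'i})p_{l'i}}{q_{0k}}\frac{\beta_{0l'i}^2}{\beta_{00k}}+\frac{2}{\tau_c}p_{0k}\beta_{00k}+\frac{2}{\tau_c^2}\sum_{l'\in\Psi_D}\sum_{i=1}^K\frac{q_{l'i}p_{l'i}}{q_{0k}}\frac{\beta_{0l'i}^2}{\beta_{00k}}+\frac{1}{\tau_c^2}\sum_{l'\in\Phi_D}\sum_{i=1}^K\frac{p_{l'i}^2}{q_{0k}}\frac{\beta_{0l'i}^2}{\beta_{00k}}+\frac{1}{\gamma^{sp}_{0k}}\Big(\sum_{l'\in\Phi_D}\sum_{i=1}^K(q_{l'i}+p_{l'i})\beta_{0l'i}+\sigma^2\Big),$$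 and $R^{sp\text{-}ub}_{0k}(M)=B_W\log_2(1+Mp_{0k}\beta_{00k}/\mathcal I^{sp\text{-}ub}(M))$ with $$\mathcal I^{sp\text{-}ub}(M)=\frac{M}{\tau_c}\sum_{l'\in\Psi_D}\sum_{i=1}^K\frac{p_{l'i}q_{l'i}}{q_{0k}}\frac{\beta_{0l'i}^2}{\beta_{00k}}+\frac{M}{\tau_c}\sum_{l'\in\Phi_D}\sum_{i=1}^K\frac{p_{l'i}^2}{q_{0k}}\frac{\beta_{0l'i}^2}{\beta_{00k}}+\frac{1}{\tau_c^2}\sum_{l'\in\Phi_D}\sum_{i=1}^K\frac{p_{l'i}^2}{q_{0k}}\frac{\beta_{0l'i}^2}{\beta_{00k}}+\frac{1}{\gamma^{sp}_{0k}}\Big(\sum_{l'\in\Phi_D}\sum_{i=1}^Kp_{l'i}\beta_{0l'i}+\sigma^2\Big),$$ where $\gamma^{sp}_{0k}=\frac{q_{0k}\tau_c\beta_{00k}}{q_{0k}\tau_c\beta_{00k}+\sum_{l'\in\Psi_D}\sum_iq_{l'i}\beta_{0l'i}+\sum_{l'\in\Phi_D}\sum_ip_{l'i}\beta_{0l'i}+\sigma^2}$. Then, as $M\to\infty$, $$R^{rp}_{0k}(M)\to R^{a\text{-}rp}_{0k}=\Big(1-\frac{\tau_p}{\tau_c}\Big)B_W\log_2\!\Big(1+\frac{p_{0k}\beta_{00k}}{\frac1{\tau_p}\sum_{l'\in\Psi_D}\sum_{i=1}^K\frac{p_{l'i}q_{l'i}}{q_{0k}}\frac{\beta_{0l'i}^2}{\beta_{00k}}}\Big),$$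 $$R^{sp}_{0k}(M)\to R^{a\text{-}sp}_{0k}=B_W\log_2\!\Big(1+\frac{p_{0k}\beta_{00k}}{\frac1{\tau_c}\sum_{l'\in\Psi_D}\sum_{i=1}^K\frac{(p_{l'i}+(1-\frac1{\tau_c})q_{l'i})q_{l'i}}{q_{0k}}\frac{\beta_{0l'i}^2}{\beta_{00k}}+\frac1{\tau_c}\sum_{l'\in\Phi_D}\sum_{i=1}^K\frac{(p_{l'i}+q_{l'i})p_{l'i}}{q_{0k}}\frac{\beta_{0l'i}^2}{\beta_{00k}}}\Big),$$ and $$R^{a\text{-}sp}_{0k}\le B_W\log_2\!\Big(1+\frac{p_{0k}\beta_{00k}}{\frac1{\tau_c}\sum_{l'\in\Psi_D}\sum_{i=1}^K\frac{p_{l'i}q_{l'i}}{q_{0k}}\frac{\beta_{0l'i}^2}{\beta_{00k}}+\frac1{\tau_c}\sum_{l'\in\Phi_D}\sum_{i=1}^K\frac{p_{l'i}^2}{q_{0k}}\frac{\beta_{0l'i}^2}{\beta_{00k}}}\Big),$$ the latter being $\lim_{M\to\infty}R^{sp\text{-}ub}_{0k}(M)$.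
   Context: $R^{rp}_{0k}$, $R^{sp}_{0k}$, $R^{sp\text{-}ub}_{0k}$ are the closed-form ergodic achievable rates of user $k$ in cell $0$ of a multicell massive MIMO uplink with $M$ BS antennas per cell and maximum ratio combining, using respectively regular pilots of length $\tau_p$, superimposed pilots over the whole coherence block of $\tau_c$ samples, and superimposed pilots with perfect pilot subtraction; $p_{l'i},q_{l'i}$ are data and pilot powers of user $i$ in cell $l'$ and $\beta_{0l'i}$ its large-scale fading to BS $0$. *)

theory Defs
  imports "HOL-Analysis.Analysis"
begin

text \<open>BS indices are naturals; Phi is the set of BS indices (possibly infinite),
  users are 1..K.  p l i, q l i are data/pilot powers of user i in cell l,
  beta l i stands for beta_{0 l i} (large-scale fading to BS 0).\<close>

definition dsum :: "nat set \<Rightarrow> nat \<Rightarrow> (nat \<Rightarrow> nat \<Rightarrow> real) \<Rightarrow> real" where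
  "dsum A K f = (\<Sum>\<^sub>\<infinity>l\<in>A. \<Sum>i=1..K. f l i)"

definition gamma_rp :: "nat set \<Rightarrow> nat \<Rightarrow> nat \<Rightarrow> (nat \<Rightarrow> nat \<Rightarrow> real) \<Rightarrow> (nat \<Rightarrow> nat \<Rightarrow> real) \<Rightarrow> real \<Rightarrow> nat \<Rightarrow> real" where
  "gamma_rp Phi K taup q beta sigma2 k =
     q 0 k * real taup * beta 0 k /
     (q 0 k * real taup * beta 0 k + dsum (Phi - {0}) K (\<lambda>l i. q l i * beta l i) + sigma2)"

definition gamma_sp :: "nat set \<Rightarrow> nat \<Rightarrow> nat \<Rightarrow> (nat \<Rightarrow> nat \<Rightarrow> real) \<Rightarrow> (nat \<Rightarrow> nat \<Rightarrow> real) \<Rightarrow> (nat \<Rightarrow> nat \<Rightarrow> real) \<Rightarrow> real \<Rightarrow> nat \<Rightarrow> real" where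
  "gamma_sp Phi K tauc p q beta sigma2 k =
     q 0 k * real tauc * beta 0 k /
     (q 0 k * real tauc * beta 0 k + dsum (Phi - {0}) K (\<lambda>l i. q l i * beta l i)
       + dsum Phi K (\<lambda>l i. p l i * beta l i) + sigma2)"

definition R_rp :: "nat set \<Rightarrow> nat \<Rightarrow> nat \<Rightarrow> nat \<Rightarrow> (nat \<Rightarrow> nat \<Rightarrow> real) \<Rightarrow> (nat \<Rightarrow> nat \<Rightarrow> real) \<Rightarrow> (nat \<Rightarrow> nat \<Rightarrow> real) \<Rightarrow> real \<Rightarrow> real \<Rightarrow> nat \<Rightarrow> nat \<Rightarrow> real" where
  "R_rp Phi K taup tauc p q beta sigma2 BW k M =
     BW * (1 - real taup / real tauc) *
     log 2 (1 + real M * p 0 k * beta 0 k /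
       (real M / real taup * dsum (Phi - {0}) K (\<lambda>l i. p l i * q l i / q 0 k * beta l i ^ 2 / beta 0 k)
        + 1 / gamma_rp Phi K taup q beta sigma2 k * (dsum Phi K (\<lambda>l i. p l i * beta l i) + sigma2)))"

definition I_sp :: "nat set \<Rightarrow> nat \<Rightarrow> nat \<Rightarrow> (nat \<Rightarrow> nat \<Rightarrow> real) \<Rightarrow> (nat \<Rightarrow> nat \<Rightarrow> real) \<Rightarrow> (nat \<Rightarrow> nat \<Rightarrow> real) \<Rightarrow> real \<Rightarrow> nat \<Rightarrow> nat \<Rightarrow> real" where
  "I_sp Phi K tauc p q beta sigma2 k M =
     real M / real tauc * dsum (Phi - {0}) K
        (\<lambda>l i. (p l i + (1 - 1 / real tauc) * q l i) * q l i / q 0 k * beta l i ^ 2 / beta 0 k)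
   + real M / real tauc * dsum Phi K (\<lambda>l i. (p l i + q l i) * p l i / q 0 k * beta l i ^ 2 / beta 0 k)
   + 2 / real tauc * p 0 k * beta 0 k
   + 2 / real tauc ^ 2 * dsum (Phi - {0}) K (\<lambda>l i. q l i * p l i / q 0 k * beta l i ^ 2 / beta 0 k)
   + 1 / real tauc ^ 2 * dsum Phi K (\<lambda>l i. p l i ^ 2 / q 0 k * beta l i ^ 2 / beta 0 k)
   + 1 / gamma_sp Phi K tauc p q beta sigma2 k *
       (dsum Phi K (\<lambda>l i. (q l i + p l i) * beta l i) + sigma2)"

definition R_sp :: "nat set \<Rightarrow> nat \<Rightarrow> nat \<Rightarrow> (nat \<Rightarrow> nat \<Rightarrow> real) \<Rightarrow> (nat \<Rightarrow> nat \<Rightarrow> real) \<Rightarrow> (nat \<Rightarrow> nat \<Rightarrow> real) \<Rightarrow> real \<Rightarrow> real \<Rightarrow> nat \<Rightarrow> nat \<Rightarrow> real" where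
  "R_sp Phi K tauc p q beta sigma2 BW k M =
     BW * log 2 (1 + real M * p 0 k * beta 0 k / I_sp Phi K tauc p q beta sigma2 k M)"

definition I_spub :: "nat set \<Rightarrow> nat \<Rightarrow> nat \<Rightarrow> (nat \<Rightarrow> nat \<Rightarrow> real) \<Rightarrow> (nat \<Rightarrow> nat \<Rightarrow> real) \<Rightarrow> (nat \<Rightarrow> nat \<Rightarrow> real) \<Rightarrow> real \<Rightarrow> nat \<Rightarrow> nat \<Rightarrow> real" where
  "I_spub Phi K tauc p q beta sigma2 k M =
     real M / real tauc * dsum (Phi - {0}) K (\<lambda>l i. p l i * q l i / q 0 k * beta l i ^ 2 / beta 0 k)
   + real M / real tauc * dsum Phi K (\<lambda>l i. p l i ^ 2 / q 0 k * beta l i ^ 2 / beta 0 k)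
   + 1 / real tauc ^ 2 * dsum Phi K (\<lambda>l i. p l i ^ 2 / q 0 k * beta l i ^ 2 / beta 0 k)
   + 1 / gamma_sp Phi K tauc p q beta sigma2 k *
       (dsum Phi K (\<lambda>l i. p l i * beta l i) + sigma2)"

definition R_spub :: "nat set \<Rightarrow> nat \<Rightarrow> nat \<Rightarrow> (nat \<Rightarrow> nat \<Rightarrow> real) \<Rightarrow> (nat \<Rightarrow> nat \<Rightarrow> real) \<Rightarrow> (nat \<Rightarrow> nat \<Rightarrow> real) \<Rightarrow> real \<Rightarrow> real \<Rightarrow> nat \<Rightarrow> nat \<Rightarrow> real" where
  "R_spub Phi K tauc p q beta sigma2 BW k M =
     BW * log 2 (1 + real M * p 0 k * beta 0 k / I_spub Phi K tauc p q beta sigma2 k M)"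

definition Ra_rp :: "nat set \<Rightarrow> nat \<Rightarrow> nat \<Rightarrow> nat \<Rightarrow> (nat \<Rightarrow> nat \<Rightarrow> real) \<Rightarrow> (nat \<Rightarrow> nat \<Rightarrow> real) \<Rightarrow> (nat \<Rightarrow> nat \<Rightarrow> real) \<Rightarrow> real \<Rightarrow> nat \<Rightarrow> real" where
  "Ra_rp Phi K taup tauc p q beta BW k =
     (1 - real taup / real tauc) * BW *
     log 2 (1 + p 0 k * beta 0 k /
       (1 / real taup * dsum (Phi - {0}) K (\<lambda>l i. p l i * q l i / q 0 k * beta l i ^ 2 / beta 0 k)))"

definition Ra_sp :: "nat set \<Rightarrow> nat \<Rightarrow> nat \<Rightarrow> (nat \<Rightarrow> nat \<Rightarrow> real) \<Rightarrow> (nat \<Rightarrow> nat \<Rightarrow> real) \<Rightarrow> (nat \<Rightarrow> nat \<Rightarrow> real) \<Rightarrow> real \<Rightarrow> nat \<Rightarrow> real" where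
  "Ra_sp Phi K tauc p q beta BW k =
     BW * log 2 (1 + p 0 k * beta 0 k /
       (1 / real tauc * dsum (Phi - {0}) K
          (\<lambda>l i. (p l i + (1 - 1 / real tauc) * q l i) * q l i / q 0 k * beta l i ^ 2 / beta 0 k)
        + 1 / real tauc * dsum Phi K (\<lambda>l i. (p l i + q l i) * p l i / q 0 k * beta l i ^ 2 / beta 0 k)))"

definition Ra_spub :: "nat set \<Rightarrow> nat \<Rightarrow> nat \<Rightarrow> (nat \<Rightarrow> nat \<Rightarrow> real) \<Rightarrow> (nat \<Rightarrow> nat \<Rightarrow> real) \<Rightarrow> (nat \<Rightarrow> nat \<Rightarrow> real) \<Rightarrow> real \<Rightarrow> nat \<Rightarrow> real" where
  "Ra_spub Phi K tauc p q beta BW k =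
     BW * log 2 (1 + p 0 k * beta 0 k /
       (1 / real tauc * dsum (Phi - {0}) K (\<lambda>l i. p l i * q l i / q 0 k * beta l i ^ 2 / beta 0 k)
        + 1 / real tauc * dsum Phi K (\<lambda>l i. p l i ^ 2 / q 0 k * beta l i ^ 2 / beta 0 k)))"

end

theory Submission
  imports Defs
begin

text \<open>Each closed-form rate has the shape \<open>C * log 2 (1 + M a / (M b + c))\<close>, where
  \<open>M b\<close> collects the interference terms that grow with the number of antennas.  Hence
  the rate converges to \<open>C * log 2 (1 + a / b)\<close> as soon as \<open>b > 0\<close>, which holds because
  cell \<open>0\<close> has an interfering cell and all powers and fading coefficients are positive.
  The noise power and the first-order sums only enter \<open>c\<close>.  The bound on the superimposed-pilot limit compares the
  asymptotic interference termwise, \<open>p q \<le> (p + (1 - 1/\<tau>\<^sub>c) q) q\<close> and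
  \<open>p\<^sup>2 \<le> (p + q) p\<close>, and uses that \<open>log 2 (1 + a / x)\<close> decreases in \<open>x\<close>.\<close>

lemma tendsto_log_one_plus_ratio:
  fixes a b c C :: real
  assumes "0 < b" "0 \<le> a"
  shows "(\<lambda>M::nat. C * log 2 (1 + real M * a / (real M * b + c)))
           \<longlonglongrightarrow> C * log 2 (1 + a / b)"
proof -
  have "(\<lambda>M::nat. a / (b + c / real M)) \<longlonglongrightarrow> a / (b + 0)"
    by (intro tendsto_intros) (use assms in auto)
  moreover have "\<forall>\<^sub>F M in sequentially. a / (b + c / real M) = real M * a / (real M * b + c)"
    using eventually_gt_at_top[of "0::nat"] by eventually_elim (auto simp: field_simps)
  ultimately have ratio: "(\<lambda>M::nat. real M * a / (real M * b + c)) \<longlonglongrightarrow> a / b"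
    by (simp add: Lim_transform_eventually)
  have "0 < 1 + a / b" using assms by (simp add: add_pos_nonneg)
  then show ?thesis by (intro tendsto_intros ratio) auto
qed

lemma log_one_plus_ratio_antimono:
  fixes a u v :: real
  assumes "0 \<le> a" "0 < u" "u \<le> v"
  shows "log 2 (1 + a / v) \<le> log 2 (1 + a / u)"
proof -
  have "a / v \<le> a / u"
    using assms by (intro divide_left_mono) auto
  moreover have "0 < 1 + a / v"
    using assms by (intro add_pos_nonneg) auto
  ultimately show ?thesis by simp
qed

lemma dsum_pos:
  assumes "(\<lambda>l. \<Sum>i=1..K. f l i) summable_on A" "x \<in> A" "1 \<le> K"
    and "\<And>l i. l \<in> A \<Longrightarrow> i \<in> {1..K} \<Longrightarrow> 0 < f l i"
  shows "0 < dsum A K f"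
proof -
  have nonneg: "0 \<le> (\<Sum>i=1..K. f l i)" if "l \<in> A" for l
    using assms(4) that by (intro sum_nonneg) (simp add: less_imp_le)
  have "0 < (\<Sum>i=1..K. f x i)"
    using assms by (intro sum_pos) auto
  also have "\<dots> = (\<Sum>\<^sub>\<infinity>l\<in>{x}. \<Sum>i=1..K. f l i)" by simp
  also have "\<dots> \<le> (\<Sum>\<^sub>\<infinity>l\<in>A. \<Sum>i=1..K. f l i)"
    using assms nonneg by (intro infsum_mono_neutral) auto
  finally show ?thesis unfolding dsum_def .
qed

lemma dsum_mono:
  assumes "(\<lambda>l. \<Sum>i=1..K. f l i) summable_on A" "(\<lambda>l. \<Sum>i=1..K. g l i) summable_on A"
    and "\<And>l i. l \<in> A \<Longrightarrow> i \<in> {1..K} \<Longrightarrow> f l i \<le> g l i"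
  shows "dsum A K f \<le> dsum A K g"
  unfolding dsum_def using assms by (intro infsum_mono sum_mono) auto

locale uplink_cell =
  fixes Phi :: "nat set" and K taup tauc k :: nat and p q beta :: "nat \<Rightarrow> nat \<Rightarrow> real"
  assumes Phi0: "0 \<in> Phi" and Psi_ne: "Phi - {0} \<noteq> {}" and k: "k \<in> {1..K}"
    and taup_pos: "0 < taup" and taup_le_tauc: "taup \<le> tauc"
    and pos_p: "\<And>l i. l \<in> Phi \<Longrightarrow> i \<in> {1..K} \<Longrightarrow> 0 < p l i"
    and pos_q: "\<And>l i. l \<in> Phi \<Longrightarrow> i \<in> {1..K} \<Longrightarrow> 0 < q l i"
    and pos_beta: "\<And>l i. l \<in> Phi \<Longrightarrow> i \<in> {1..K} \<Longrightarrow> 0 < beta l i"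
    and summ_pqb2: "(\<lambda>l. \<Sum>i=1..K. p l i * q l i * beta l i ^ 2) summable_on Phi"
    and summ_ppb2: "(\<lambda>l. \<Sum>i=1..K. p l i ^ 2 * beta l i ^ 2) summable_on Phi"
    and summ_qqb2: "(\<lambda>l. \<Sum>i=1..K. q l i ^ 2 * beta l i ^ 2) summable_on Phi"
begin

lemma pos_power_fading:
  assumes "l \<in> Phi" "i \<in> {1..K}"
  shows "0 < p l i" "0 < q l i" "0 < beta l i"
  using assms pos_p pos_q pos_beta by auto

lemma pos_0k: "0 < p 0 k" "0 < q 0 k" "0 < beta 0 k"
  using pos_power_fading[OF Phi0 k] by auto

lemma tauc_pos: "0 < tauc"
  using taup_pos taup_le_tauc by simp

lemma tauc_factor_nonneg: "0 \<le> 1 - 1 / real tauc"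
  using tauc_pos by (simp add: field_simps)

abbreviation "pilot_contamination \<equiv> \<lambda>l i. p l i * q l i / q 0 k * beta l i ^ 2 / beta 0 k"
abbreviation "pilot_contamination_sp \<equiv>
  \<lambda>l i. (p l i + (1 - 1 / real tauc) * q l i) * q l i / q 0 k * beta l i ^ 2 / beta 0 k"
abbreviation "data_interference_sp \<equiv>
  \<lambda>l i. (p l i + q l i) * p l i / q 0 k * beta l i ^ 2 / beta 0 k"
abbreviation "data_interference_spub \<equiv> \<lambda>l i. p l i ^ 2 / q 0 k * beta l i ^ 2 / beta 0 k"

abbreviation "asymptotic_interference_sp \<equiv>
  1 / real tauc * dsum (Phi - {0}) K pilot_contamination_sp
  + 1 / real tauc * dsum Phi K data_interference_sp"
abbreviation "asymptotic_interference_spub \<equiv>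
  1 / real tauc * dsum (Phi - {0}) K pilot_contamination
  + 1 / real tauc * dsum Phi K data_interference_spub"

lemma interference_terms_pos:
  assumes "l \<in> Phi" "i \<in> {1..K}"
  shows "0 < pilot_contamination l i" "0 < pilot_contamination_sp l i"
    "0 < data_interference_sp l i" "0 < data_interference_spub l i"
proof -
  note pos = pos_power_fading[OF assms] pos_0k
  show "0 < pilot_contamination l i" "0 < data_interference_sp l i"
    "0 < data_interference_spub l i"
    using pos by simp_all
  have "0 < p l i + (1 - 1 / real tauc) * q l i"
    using pos tauc_factor_nonneg by (intro add_pos_nonneg mult_nonneg_nonneg) auto
  then show "0 < pilot_contamination_sp l i"
    using pos by simp
qed

lemma interference_terms_le:
  assumes "l \<in> Phi" "i \<in> {1..K}"
  shows "pilot_contamination l i \<le> pilot_contamination_sp l i"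
    and "data_interference_spub l i \<le> data_interference_sp l i"
proof -
  note pos = pos_power_fading[OF assms] pos_0k
  have "0 \<le> (1 - 1 / real tauc) * q l i * q l i"
    using pos tauc_factor_nonneg by (intro mult_nonneg_nonneg) auto
  then have "p l i * q l i \<le> (p l i + (1 - 1 / real tauc) * q l i) * q l i"
    by (simp add: distrib_right)
  then show "pilot_contamination l i \<le> pilot_contamination_sp l i"
    using pos by (intro divide_right_mono mult_right_mono) auto
  have "p l i ^ 2 \<le> (p l i + q l i) * p l i"
    using pos by (simp add: algebra_simps power2_eq_square)
  then show "data_interference_spub l i \<le> data_interference_sp l i"
    using pos by (intro divide_right_mono mult_right_mono) auto
qed

lemma summable_second_order_combination:
  assumes "A \<subseteq> Phi"
    and "\<And>l i. f l i = (a * (p l i * q l i * beta l i ^ 2) + b * (q l i ^ 2 * beta l i ^ 2)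
                           + c * (p l i ^ 2 * beta l i ^ 2)) / (q 0 k * beta 0 k)"
  shows "(\<lambda>l. \<Sum>i=1..K. f l i) summable_on A"
proof -
  have "(\<lambda>l. (a * (\<Sum>i=1..K. p l i * q l i * beta l i ^ 2)
              + b * (\<Sum>i=1..K. q l i ^ 2 * beta l i ^ 2)
              + c * (\<Sum>i=1..K. p l i ^ 2 * beta l i ^ 2)) / (q 0 k * beta 0 k)) summable_on Phi"
    unfolding divide_inverse
    by (intro summable_on_cmult_left summable_on_add summable_on_cmult_right
        summ_pqb2 summ_qqb2 summ_ppb2)
  then have "(\<lambda>l. \<Sum>i=1..K. f l i) summable_on Phi"
    by (simp add: assms(2) sum_divide_distrib[symmetric] sum.distrib sum_distrib_left)
  then show ?thesis using summable_on_subset assms(1) by blast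
qed

lemma summable_interference_terms:
  assumes "A \<subseteq> Phi"
  shows "(\<lambda>l. \<Sum>i=1..K. pilot_contamination l i) summable_on A"
    and "(\<lambda>l. \<Sum>i=1..K. pilot_contamination_sp l i) summable_on A"
    and "(\<lambda>l. \<Sum>i=1..K. data_interference_sp l i) summable_on A"
    and "(\<lambda>l. \<Sum>i=1..K. data_interference_spub l i) summable_on A"
proof -
  note normalise = summable_second_order_combination[OF assms]
  note pos = pos_0k[THEN less_imp_neq, symmetric]
  show "(\<lambda>l. \<Sum>i=1..K. pilot_contamination l i) summable_on A"
    by (rule normalise[where a = 1 and b = 0 and c = 0]) (simp add: pos)
  show "(\<lambda>l. \<Sum>i=1..K. pilot_contamination_sp l i) summable_on A"
    by (rule normalise[where a = 1 and b = "1 - 1 / real tauc" and c = 0])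
      (simp add: pos field_simps power2_eq_square)
  show "(\<lambda>l. \<Sum>i=1..K. data_interference_sp l i) summable_on A"
    by (rule normalise[where a = 1 and b = 0 and c = 1])
      (simp add: pos field_simps power2_eq_square)
  show "(\<lambda>l. \<Sum>i=1..K. data_interference_spub l i) summable_on A"
    by (rule normalise[where a = 0 and b = 0 and c = 1]) (simp add: pos)
qed

lemma dsum_interference_pos:
  assumes "A \<subseteq> Phi" "A \<noteq> {}"
    and "\<And>l i. l \<in> Phi \<Longrightarrow> i \<in> {1..K} \<Longrightarrow> 0 < f l i"
    and "(\<lambda>l. \<Sum>i=1..K. f l i) summable_on A"
  shows "0 < dsum A K f"
proof -
  obtain x where "x \<in> A" using assms(2) by blast
  then show ?thesis
    using assms k by (intro dsum_pos[where A = A and x = x]) auto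
qed

lemma pilot_contamination_pos: "0 < dsum (Phi - {0}) K pilot_contamination"
  using Psi_ne interference_terms_pos summable_interference_terms
  by (intro dsum_interference_pos) auto

lemma asymptotic_interference_sp_pos: "0 < asymptotic_interference_sp"
proof -
  have "0 < dsum (Phi - {0}) K pilot_contamination_sp" "0 < dsum Phi K data_interference_sp"
    using Psi_ne Phi0 interference_terms_pos summable_interference_terms
    by (intro dsum_interference_pos; auto)+
  then show ?thesis using tauc_pos by (intro add_pos_pos mult_pos_pos) auto
qed

lemma asymptotic_interference_spub_pos: "0 < asymptotic_interference_spub"
proof -
  have "0 < dsum Phi K data_interference_spub"
    using Phi0 interference_terms_pos summable_interference_terms
    by (intro dsum_interference_pos) auto
  then show ?thesis
    using pilot_contamination_pos tauc_pos by (intro add_pos_pos mult_pos_pos) auto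
qed

lemma asymptotic_interference_spub_le_sp:
  "asymptotic_interference_spub \<le> asymptotic_interference_sp"
proof -
  have "dsum (Phi - {0}) K pilot_contamination \<le> dsum (Phi - {0}) K pilot_contamination_sp"
    "dsum Phi K data_interference_spub \<le> dsum Phi K data_interference_sp"
    using interference_terms_le summable_interference_terms by (intro dsum_mono; auto)+
  then show ?thesis using tauc_pos by (intro add_mono mult_left_mono) auto
qed

lemma R_rp_tendsto:
  "(\<lambda>M. R_rp Phi K taup tauc p q beta sigma2 BW k M) \<longlonglongrightarrow> Ra_rp Phi K taup tauc p q beta BW k"
proof -
  define D where "D = dsum (Phi - {0}) K pilot_contamination"
  define c where "c = 1 / gamma_rp Phi K taup q beta sigma2 k
                        * (dsum Phi K (\<lambda>l i. p l i * beta l i) + sigma2)"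
  have "(\<lambda>M::nat. (BW * (1 - real taup / real tauc))
          * log 2 (1 + real M * (p 0 k * beta 0 k) / (real M * (D / real taup) + c)))
        \<longlonglongrightarrow> (BW * (1 - real taup / real tauc)) * log 2 (1 + p 0 k * beta 0 k / (D / real taup))"
    using pilot_contamination_pos taup_pos pos_0k
    by (intro tendsto_log_one_plus_ratio) (auto simp: D_def)
  then show ?thesis by (simp add: R_rp_def Ra_rp_def D_def c_def ac_simps)
qed

lemma R_sp_tendsto:
  "(\<lambda>M. R_sp Phi K tauc p q beta sigma2 BW k M) \<longlonglongrightarrow> Ra_sp Phi K tauc p q beta BW k"
proof -
  define D where "D = asymptotic_interference_sp"
  define c where "c = I_sp Phi K tauc p q beta sigma2 k 0"
  have "I_sp Phi K tauc p q beta sigma2 k M = real M * D + c" for M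
    by (simp add: I_sp_def D_def c_def algebra_simps)
  moreover have "(\<lambda>M::nat. BW * log 2 (1 + real M * (p 0 k * beta 0 k) / (real M * D + c)))
        \<longlonglongrightarrow> BW * log 2 (1 + p 0 k * beta 0 k / D)"
    using pos_0k unfolding D_def
    by (intro tendsto_log_one_plus_ratio asymptotic_interference_sp_pos) simp
  ultimately show ?thesis by (simp add: R_sp_def Ra_sp_def D_def ac_simps)
qed

lemma R_spub_tendsto:
  "(\<lambda>M. R_spub Phi K tauc p q beta sigma2 BW k M) \<longlonglongrightarrow> Ra_spub Phi K tauc p q beta BW k"
proof -
  define D where "D = asymptotic_interference_spub"
  define c where "c = I_spub Phi K tauc p q beta sigma2 k 0"
  have "I_spub Phi K tauc p q beta sigma2 k M = real M * D + c" for M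
    by (simp add: I_spub_def D_def c_def algebra_simps)
  moreover have "(\<lambda>M::nat. BW * log 2 (1 + real M * (p 0 k * beta 0 k) / (real M * D + c)))
        \<longlonglongrightarrow> BW * log 2 (1 + p 0 k * beta 0 k / D)"
    using pos_0k unfolding D_def
    by (intro tendsto_log_one_plus_ratio asymptotic_interference_spub_pos) simp
  ultimately show ?thesis by (simp add: R_spub_def Ra_spub_def D_def ac_simps)
qed

lemma Ra_sp_le_Ra_spub:
  assumes "0 \<le> BW"
  shows "Ra_sp Phi K tauc p q beta BW k \<le> Ra_spub Phi K tauc p q beta BW k"
proof -
  have "log 2 (1 + p 0 k * beta 0 k / asymptotic_interference_sp)
          \<le> log 2 (1 + p 0 k * beta 0 k / asymptotic_interference_spub)"
    using pos_0k
    by (intro log_one_plus_ratio_antimono asymptotic_interference_spub_pos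
        asymptotic_interference_spub_le_sp) simp
  then show ?thesis
    unfolding Ra_sp_def Ra_spub_def using assms by (rule mult_left_mono)
qed

end

theorem corollary2:
  fixes Phi :: "nat set" and K taup tauc k :: nat
    and p q beta :: "nat \<Rightarrow> nat \<Rightarrow> real" and sigma2 BW :: real
  assumes Phi0: "0 \<in> Phi"
    and Psi_ne: "Phi - {0} \<noteq> {}"
    and K: "1 \<le> K" and Ktaup: "K \<le> taup" and taupc: "taup \<le> tauc"
    and k: "k \<in> {1..K}"
    and pos_p: "\<And>l i. l \<in> Phi \<Longrightarrow> i \<in> {1..K} \<Longrightarrow> p l i > 0"
    and pos_q: "\<And>l i. l \<in> Phi \<Longrightarrow> i \<in> {1..K} \<Longrightarrow> q l i > 0"
    and pos_beta: "\<And>l i. l \<in> Phi \<Longrightarrow> i \<in> {1..K} \<Longrightarrow> beta l i > 0"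
    and sigma2: "sigma2 > 0" and BW: "BW > 0"
    and summ_pb: "(\<lambda>l. \<Sum>i=1..K. p l i * beta l i) summable_on Phi"
    and summ_qb: "(\<lambda>l. \<Sum>i=1..K. q l i * beta l i) summable_on Phi"
    and summ_pqb2: "(\<lambda>l. \<Sum>i=1..K. p l i * q l i * beta l i ^ 2) summable_on Phi"
    and summ_ppb2: "(\<lambda>l. \<Sum>i=1..K. p l i ^ 2 * beta l i ^ 2) summable_on Phi"
    and summ_qqb2: "(\<lambda>l. \<Sum>i=1..K. q l i ^ 2 * beta l i ^ 2) summable_on Phi"
  shows "(\<lambda>M. R_rp Phi K taup tauc p q beta sigma2 BW k M)
            \<longlonglongrightarrow> Ra_rp Phi K taup tauc p q beta BW k
       \<and> (\<lambda>M. R_sp Phi K tauc p q beta sigma2 BW k M)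
            \<longlonglongrightarrow> Ra_sp Phi K tauc p q beta BW k
       \<and> Ra_sp Phi K tauc p q beta BW k \<le> Ra_spub Phi K tauc p q beta BW k
       \<and> (\<lambda>M. R_spub Phi K tauc p q beta sigma2 BW k M)
            \<longlonglongrightarrow> Ra_spub Phi K tauc p q beta BW k"
proof -
  interpret uplink_cell Phi K taup tauc k p q beta
    using Phi0 Psi_ne k K Ktaup taupc pos_p pos_q pos_beta summ_pqb2 summ_ppb2 summ_qqb2
    by unfold_locales auto
  show ?thesis
    using R_rp_tendsto R_sp_tendsto Ra_sp_le_Ra_spub[of BW] R_spub_tendsto BW by simp
qed

end
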